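(* Let $\mathcal A\in\mathbb R^{N\times N}$ be Hurwitz and $U\in\mathbb R^{N\times N}$ be such that the unique solution $V$ of the algebraic Lyapunov equation $\mathcal AV+V\mathcal A^T+U=0$ is nonsingular. Then, with $G(s):=(sI_N-\mathcal A)^{-1}$, $$G(i\lambda)\,U\,G(i\lambda)^*=V\,G(i\lambda)^*\,V^{-1}UV^{-1}\,G(i\lambda)\,V\qquad\text{for all }\lambda\in\mathbb R .$$
   Context: $(\cdot)^*$ denotes the conjugate transpose. *)

theory Defs
  imports "HOL-Analysis.Analysis"
begin

definition cmat :: "real^'n^'m \<Rightarrow> complex^'n^'m" where
  "cmat M = (\<chi> i j. complex_of_real (M $ i $ j))"

definition ctrans :: "complex^'n^'m \<Rightarrow> complex^'m^'n" where
  "ctrans M = (\<chi> i j. cnj (M $ j $ i))"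

definition hurwitz :: "real^'n^'n \<Rightarrow> bool" where
  "hurwitz A \<longleftrightarrow> (\<forall>(l::complex) (v::complex^'n). v \<noteq> 0 \<and> cmat A *v v = l *s v \<longrightarrow> Re l < 0)"

definition resolvent :: "real^'n^'n \<Rightarrow> complex \<Rightarrow> complex^'n^'n" where
  "resolvent A s = matrix_inv (mat s - cmat A)"

end

theory Submission
  imports Defs
begin

text \<open>On the imaginary axis \<open>s = i\<lambda>\<close> we have \<open>cnj s = -s\<close>, so with \<open>M = sI - A\<close> the
  Lyapunov equation reads \<open>U = M V + V M\<^sup>*\<close>. Since \<open>G = M\<^sup>-\<^sup>1\<close> exists (no eigenvalue of a
  Hurwitz matrix lies on the imaginary axis), both sides of the claimed identity collapse to
  \<open>V G\<^sup>* + G V\<close>: on the left by cancelling \<open>G M\<close> and \<open>M\<^sup>* G\<^sup>*\<close>, on the right because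
  \<open>V\<^sup>-\<^sup>1 U V\<^sup>-\<^sup>1 = V\<^sup>-\<^sup>1 M + M\<^sup>* V\<^sup>-\<^sup>1\<close>.\<close>

lemma cmat_mult: "cmat (X ** Y) = cmat X ** cmat Y"
  by (simp add: cmat_def matrix_matrix_mult_def vec_eq_iff)

lemma cmat_add: "cmat (X + Y) = cmat X + cmat Y"
  by (simp add: cmat_def vec_eq_iff)

lemma cmat_uminus: "cmat (- X) = - cmat X"
  by (simp add: cmat_def vec_eq_iff)

lemma cmat_mat: "cmat (mat c) = mat (complex_of_real c)"
  by (simp add: cmat_def mat_def vec_eq_iff)

lemma ctrans_mult: "ctrans (X ** Y) = ctrans Y ** ctrans X"
  by (simp add: ctrans_def matrix_matrix_mult_def vec_eq_iff mult.commute)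

lemma ctrans_mat: "ctrans (mat c) = mat (cnj c)"
  by (simp add: ctrans_def mat_def vec_eq_iff)

lemma ctrans_diff: "ctrans (X - Y) = ctrans X - ctrans Y"
  by (simp add: ctrans_def vec_eq_iff)

lemma ctrans_cmat: "ctrans (cmat X) = cmat (transpose X)"
  by (simp add: ctrans_def cmat_def transpose_def vec_eq_iff)

lemma matrix_add_rdistrib: "(B + C) ** (A::'a::semiring_1^'n^'m) = B ** A + C ** A"
  by (simp add: matrix_matrix_mult_def vec_eq_iff distrib_right sum.distrib)

lemma matrix_inv_right_left:
  assumes "invertible (M::'a::semiring_1^'n^'n)"
  shows matrix_inv_right: "M ** matrix_inv M = mat 1"
    and matrix_inv_left: "matrix_inv M ** M = mat 1"
  using someI_ex[OF assms[unfolded invertible_def]] unfolding matrix_inv_def by auto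

lemma invertible_shift_of_hurwitz:
  fixes A :: "real^'n^'n"
  assumes "hurwitz A" and "0 \<le> Re s"
  shows "invertible (mat s - cmat A)"
  unfolding invertible_left_inverse matrix_left_invertible_ker
proof (intro allI impI)
  fix x :: "complex^'n"
  assume "(mat s - cmat A) *v x = 0"
  moreover have "(mat s - cmat A) *v x = s *s x - cmat A *v x"
    by (simp add: matrix_vector_mult_def mat_def vec_eq_iff left_diff_distrib sum_subtractf
        if_distrib[of "\<lambda>y. y * _"] cong: if_cong)
  ultimately have "cmat A *v x = s *s x"
    by simp
  then show "x = 0"
    using assms unfolding hurwitz_def by force
qed

lemma lyapunov_shifted:
  fixes A U V :: "real^'n^'n"
  assumes "A ** V + V ** transpose A + U = 0" and "cnj s = - s"
  shows "cmat U = (mat s - cmat A) ** cmat V + cmat V ** ctrans (mat s - cmat A)"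
proof -
  have "U = - (A ** V + V ** transpose A)"
    using assms(1) by (metis neg_eq_iff_add_eq_0)
  then have "cmat U = - (cmat A ** cmat V + cmat V ** cmat (transpose A))"
    by (simp only: cmat_add cmat_uminus cmat_mult)
  then show ?thesis
    unfolding ctrans_diff ctrans_mat ctrans_cmat assms(2)
    by (simp add: matrix_matrix_mult_def mat_def vec_eq_iff algebra_simps sum_subtractf
        sum.distrib if_distrib[of "\<lambda>y. y * _"] if_distrib[of "\<lambda>y. _ * y"] cong: if_cong)
qed

lemma sandwich_by_inverses:
  fixes G M N H W :: "'a::semiring_1^'n^'n"
  assumes "G ** M = mat 1" and "N ** H = mat 1"
  shows "G ** (M ** W + W ** N) ** H = W ** H + G ** W"
  by (simp add: matrix_add_ldistrib matrix_add_rdistrib matrix_mul_assoc assms(1)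
      flip: matrix_mul_assoc[of _ N H] add: assms(2))

lemma congruence_sandwich_by_inverses:
  fixes G M N H W Wi :: "'a::semiring_1^'n^'n"
  assumes "M ** G = mat 1" and "H ** N = mat 1"
    and "W ** Wi = mat 1" and "Wi ** W = mat 1"
  shows "W ** H ** Wi ** (M ** W + W ** N) ** Wi ** G ** W = W ** H + G ** W"
proof -
  have middle: "Wi ** (M ** W + W ** N) ** Wi = Wi ** M + N ** Wi"
    by (simp add: matrix_add_ldistrib matrix_add_rdistrib matrix_mul_assoc assms(4)
        flip: matrix_mul_assoc[of _ W Wi] add: assms(3))
  have "W ** H ** Wi ** (M ** W + W ** N) ** Wi ** G ** W
      = W ** H ** (Wi ** (M ** W + W ** N) ** Wi) ** G ** W"
    by (simp only: matrix_mul_assoc)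
  also have "\<dots> = W ** H ** (Wi ** M + N ** Wi) ** G ** W"
    by (simp only: middle)
  also have "\<dots> = W ** H ** Wi ** (M ** G) ** W + W ** (H ** N) ** Wi ** G ** W"
    by (simp add: matrix_add_ldistrib matrix_add_rdistrib matrix_mul_assoc)
  also have "\<dots> = W ** H + G ** W"
    by (simp add: assms flip: matrix_mul_assoc add: matrix_mul_assoc[symmetric])
  finally show ?thesis .
qed

theorem lemma7p2:
  fixes A U V :: "real^'n^'n"
  assumes "hurwitz A"
    and "A ** V + V ** transpose A + U = 0"
    and "invertible V"
  shows "\<forall>lam::real.
    resolvent A (\<i> * complex_of_real lam) ** cmat U ** ctrans (resolvent A (\<i> * complex_of_real lam))
    = cmat V ** ctrans (resolvent A (\<i> * complex_of_real lam)) ** cmat (matrix_inv V) ** cmat U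
        ** cmat (matrix_inv V) ** resolvent A (\<i> * complex_of_real lam) ** cmat V"
proof
  fix lam :: real
  define s where "s = \<i> * complex_of_real lam"
  define M where "M = mat s - cmat A"
  have "invertible M"
    unfolding M_def by (rule invertible_shift_of_hurwitz[OF assms(1)]) (simp add: s_def)
  then have MG: "M ** resolvent A s = mat 1" and GM: "resolvent A s ** M = mat 1"
    by (simp_all add: resolvent_def M_def matrix_inv_right matrix_inv_left)
  have U: "cmat U = M ** cmat V + cmat V ** ctrans M"
    unfolding M_def by (rule lyapunov_shifted[OF assms(2)]) (simp add: s_def)
  have VVi: "cmat V ** cmat (matrix_inv V) = mat 1" "cmat (matrix_inv V) ** cmat V = mat 1"
    using assms(3) by (simp_all add: cmat_mat matrix_inv_right matrix_inv_left flip: cmat_mult)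
  show "resolvent A s ** cmat U ** ctrans (resolvent A s)
    = cmat V ** ctrans (resolvent A s) ** cmat (matrix_inv V) ** cmat U
        ** cmat (matrix_inv V) ** resolvent A s ** cmat V"
    unfolding U
    by (simp add: sandwich_by_inverses congruence_sandwich_by_inverses GM MG VVi ctrans_mat
        flip: ctrans_mult)
qed

end
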